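(* Let $\Lambda_\infty=(r_0=0,r_1,r_2,\dots)$ be strictly increasing with $\lim_{n\to\infty}r_n=\infty$ and $\sum_{i=1}^\infty 1/r_i<\infty$. Let $0<a<1$, $n\ge1$, and let $P\in E(\Lambda_n)$ be $\mathbb{R}^s$-valued with $P'(a)\neq 0$. Then there is a constant $c>0$ depending only on $\Lambda_\infty$ and $a$ such that for all $m\ge n$, $$\bigl\|\eta_0(P,\Lambda_m,[a,1])-\eta_1(P,\Lambda_m,[a,1])\bigr\|_\infty\ \ge\ \frac{\|P'(a)\|_\infty}{c}>0 .$$
   Context: For a sequence $0=r_0<r_1<r_2<\cdots$ of reals, write $\Lambda_n=(r_0,\dots,r_n)$ and $E(\Lambda_n)=\mathrm{span}(t^{r_0}=1,t^{r_1},\dots,t^{r_n})$ (functions on $]0,\infty[$); an $\mathbb{R}^s$-valued element of $E(\Lambda_n)$ is a map $t\mapsto\sum_{k=0}^n t^{r_k}A_k$ with $A_k\in\mathbb{R}^s$. For an interval $[a,b]$ with $0<a<b$, the Chebyshev–Bernstein basis $(B^n_{0,\Lambda_n},\dots,B^n_{n,\Lambda_n})$ of $E(\Lambda_n)$ over $[a,b]$ is the unique basis of $E(\Lambda_n)$ with $\sum_{k=0}^n B^n_{k,\Lambda_n}\equiv 1$ such that, for each $k$, $B^n_{k,\Lambda_n}$ has a zero of multiplicity (exactly) $k$ at $a$ and of multiplicity $n-k$ at $b$. For $P\in E(\Lambda_n)$ and $m\ge n$, the control points $\eta_i(P,\Lambda_m,[a,b])\in\mathbb{R}^s$, $i=0,\dots,m$,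 are defined by $P(t)=\sum_{i=0}^m B^m_{i,\Lambda_m}(t)\,\eta_i(P,\Lambda_m,[a,b])$. *)

theory Defs
  imports "HOL-Analysis.Analysis"
begin

definition inE :: "(nat \<Rightarrow> real) \<Rightarrow> nat \<Rightarrow> (real \<Rightarrow> real) \<Rightarrow> bool" where
  "inE r n f \<longleftrightarrow> (\<exists>A::nat \<Rightarrow> real. \<forall>t>0. f t = (\<Sum>k\<le>n. A k * t powr r k))"

definition zero_mult :: "(real \<Rightarrow> real) \<Rightarrow> real \<Rightarrow> nat \<Rightarrow> bool" where
  "zero_mult f x k \<longleftrightarrow> (\<forall>j<k. (deriv ^^ j) f x = 0) \<and> (deriv ^^ k) f x \<noteq> 0"

definition CB_basis :: "(nat \<Rightarrow> real) \<Rightarrow> nat \<Rightarrow> real \<Rightarrow> real \<Rightarrow> (nat \<Rightarrow> real \<Rightarrow> real) \<Rightarrow> bool" where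
  "CB_basis r n a b B \<longleftrightarrow>
     (\<forall>k\<le>n. inE r n (B k)) \<and>
     (\<forall>c::nat \<Rightarrow> real. (\<forall>t>0. (\<Sum>k\<le>n. c k * B k t) = 0) \<longrightarrow> (\<forall>k\<le>n. c k = 0)) \<and>
     (\<forall>f. inE r n f \<longrightarrow> (\<exists>c::nat \<Rightarrow> real. \<forall>t>0. f t = (\<Sum>k\<le>n. c k * B k t))) \<and>
     (\<forall>t>0. (\<Sum>k\<le>n. B k t) = 1) \<and>
     (\<forall>k\<le>n. zero_mult (B k) a k \<and> zero_mult (B k) b (n - k))"

text \<open>Sup norm of a vector in R^s, vectors represented as functions on {..<s}.\<close>
definition supnorm :: "nat \<Rightarrow> (nat \<Rightarrow> real) \<Rightarrow> real" where
  "supnorm s v = Max ((\<lambda>j. \<bar>v j\<bar>) ` {..<s})"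

end

theory Submission
  imports Defs "HOL-Computational_Algebra.Polynomial"
begin

(* Substituting t = exp (- y) turns t powr r k into exp (- r k * y).  The basis function B 0 of
   E(\<Lambda>_m) over [a, 1] vanishes to order m at t = 1, and in the variable y it is a multiple of
   the distribution function F_m of a sum of independent exponential variables with rates
   r 1, ..., r m, normalised to be 1 at y = - ln a.  Hence B_0'(a) = - F_m'(- ln a) / (a F_m(- ln a)).
   The density F_m' is at most r 1, and since the mean \<Sum> 1 / r i of the sum stays bounded,
   Markov's inequality applied to a tail of the sum bounds F_m(- ln a) below uniformly in m.
   Finally only B 0 and B 1 have a nonzero derivative at a, and B 0 + B 1 has derivative 0 there,
   so P'(a) = B_0'(a) (\<eta>_0 - \<eta>_1). *)

section \<open>Linear relaxation equations\<close>

lemma relaxation_integrating_factor: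
  fixes u v :: "real \<Rightarrow> real"
  assumes "\<And>x. (u has_real_derivative \<rho> * (v x - u x)) (at x)"
  shows "((\<lambda>x. exp (\<rho> * x) * (u x - M)) has_real_derivative \<rho> * exp (\<rho> * x) * (v x - M)) (at x)"
  by (rule derivative_eq_intros assms refl | simp add: algebra_simps)+

lemma relaxation_lower_bound:
  fixes u v :: "real \<Rightarrow> real"
  assumes u: "\<And>x. (u has_real_derivative \<rho> * (v x - u x)) (at x)"
    and "0 \<le> \<rho>" "y0 \<le> y" "\<And>x. y0 \<le> x \<Longrightarrow> M \<le> v x" "M \<le> u y0"
  shows "M \<le> u y"
proof -
  have "exp (\<rho> * y0) * (u y0 - M) \<le> exp (\<rho> * y) * (u y - M)"
    by (rule deriv_nonneg_imp_mono[OF relaxation_integrating_factor[OF u]]) (use assms in auto)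
  moreover have "0 \<le> exp (\<rho> * y0) * (u y0 - M)" using assms by simp
  ultimately have "0 \<le> exp (\<rho> * y) * (u y - M)" by linarith
  then show ?thesis by (simp add: zero_le_mult_iff)
qed

lemma relaxation_upper_bound:
  fixes u v :: "real \<Rightarrow> real"
  assumes u: "\<And>x. (u has_real_derivative \<rho> * (v x - u x)) (at x)"
    and "0 \<le> \<rho>" "y0 \<le> y" "\<And>x. y0 \<le> x \<Longrightarrow> v x \<le> M" "u y0 \<le> M"
  shows "u y \<le> M"
proof -
  have "((\<lambda>x. - u x) has_real_derivative \<rho> * (- v x - - u x)) (at x)" for x
    using DERIV_minus[OF u] by (simp add: algebra_simps)
  from relaxation_lower_bound[OF this, of y0 y "- M"] assms show ?thesis by simp
qed

lemma relaxation_strict_lower_bound: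
  fixes u v :: "real \<Rightarrow> real"
  assumes u: "\<And>x. (u has_real_derivative \<rho> * (v x - u x)) (at x)"
    and "0 < \<rho>" "y0 < y" "\<And>x. y0 \<le> x \<Longrightarrow> x \<le> y \<Longrightarrow> M < v x" "M \<le> u y0"
  shows "M < u y"
proof -
  have "exp (\<rho> * y0) * (u y0 - M) < exp (\<rho> * y) * (u y - M)"
  proof (rule DERIV_pos_imp_increasing[OF \<open>y0 < y\<close>])
    fix x assume "y0 \<le> x" "x \<le> y"
    then show "\<exists>z. ((\<lambda>x. exp (\<rho> * x) * (u x - M)) has_real_derivative z) (at x) \<and> 0 < z"
      using relaxation_integrating_factor[OF u] assms by fastforce
  qed
  moreover have "0 \<le> exp (\<rho> * y0) * (u y0 - M)" using assms by simp
  ultimately have "0 < exp (\<rho> * y) * (u y - M)" by linarith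
  then show ?thesis by (simp add: zero_less_mult_iff)
qed

lemma relaxation_chain_zero:
  fixes H :: "nat \<Rightarrow> real \<Rightarrow> real"
  assumes "\<And>y. H 0 y = 0" and "\<And>k. 1 \<le> k \<Longrightarrow> k \<le> n \<Longrightarrow> H k 0 = 0"
    and H: "\<And>k y. 1 \<le> k \<Longrightarrow> k \<le> n \<Longrightarrow> (H k has_real_derivative \<rho> k * (H (k - 1) y - H k y)) (at y)"
    and "k \<le> n"
  shows "H k y = 0"
  using \<open>k \<le> n\<close>
proof (induction k arbitrary: y)
  case 0
  then show ?case by (simp add: assms(1))
next
  case (Suc k)
  have "(H (Suc k) has_real_derivative \<rho> (Suc k) * (H k x - H (Suc k) x)) (at x)" for x
    using H[of "Suc k"] Suc.prems by simp
  from relaxation_integrating_factor[OF this, where M = 0]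
  have "((\<lambda>x. exp (\<rho> (Suc k) * x) * H (Suc k) x) has_real_derivative 0) (at x)" for x
    using Suc by simp
  then have "exp (\<rho> (Suc k) * y) * H (Suc k) y = exp (\<rho> (Suc k) * 0) * H (Suc k) 0"
    by (intro DERIV_isconst_all[where f = "\<lambda>x. exp (\<rho> (Suc k) * x) * H (Suc k) x"] allI)
  with assms(2)[of "Suc k"] Suc.prems show ?case by simp
qed

section \<open>Hypoexponential distribution functions\<close>

(* F k plays the role of the distribution function of a sum of independent exponential variables
   with rates \<rho> 1, ..., \<rho> k. *)
locale rate_chain =
  fixes \<rho> :: "nat \<Rightarrow> real" and F :: "nat \<Rightarrow> real \<Rightarrow> real"
  assumes rate_pos: "1 \<le> k \<Longrightarrow> 0 < \<rho> k"
    and F_zeroth: "F 0 y = 1"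
    and F_start: "1 \<le> k \<Longrightarrow> F k 0 = 0"
    and F_deriv: "1 \<le> k \<Longrightarrow> (F k has_real_derivative \<rho> k * (F (k - 1) y - F k y)) (at y)"
begin

definition density :: "nat \<Rightarrow> real \<Rightarrow> real" where
  "density k y = (if k = 0 then 0 else \<rho> k * (F (k - 1) y - F k y))"

lemma F_has_derivative: "(F k has_real_derivative density k y) (at y)"
proof (cases "k = 0")
  case True
  have "F 0 = (\<lambda>_. 1)" using F_zeroth by auto
  with True show ?thesis by (simp add: density_def)
next
  case False
  then show ?thesis using F_deriv[of k y] by (simp add: density_def)
qed

lemma density_Suc: "density (Suc k) y = \<rho> (Suc k) * (F k y - F (Suc k) y)"
  by (simp add: density_def)

lemma density_Suc_has_derivative:
  "(density (Suc k) has_real_derivative \<rho> (Suc k) * (density k y - density (Suc k) y)) (at y)"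
  unfolding density_Suc[abs_def]
  by (auto intro!: derivative_eq_intros F_has_derivative simp: density_Suc algebra_simps)

lemma density_bounds: "0 \<le> y \<Longrightarrow> 0 \<le> density k y \<and> density k y \<le> \<rho> 1"
proof (induction k arbitrary: y)
  case 0
  then show ?case using rate_pos[of 1] by (simp add: density_def)
next
  case (Suc k)
  have start: "density (Suc k) 0 = (if k = 0 then \<rho> 1 else 0)"
    by (simp add: density_Suc F_zeroth F_start)
  have rate: "0 \<le> \<rho> (Suc k)" using rate_pos[of "Suc k"] by simp
  note relax = density_Suc_has_derivative[of k]
  have "0 \<le> density (Suc k) y"
  proof (rule relaxation_lower_bound[OF relax rate \<open>0 \<le> y\<close>])
    show "0 \<le> density k x" if "0 \<le> x" for x using Suc.IH that by blast
    show "0 \<le> density (Suc k) 0" using start rate_pos[of 1] by simp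
  qed
  moreover have "density (Suc k) y \<le> \<rho> 1"
  proof (rule relaxation_upper_bound[OF relax rate \<open>0 \<le> y\<close>])
    show "density k x \<le> \<rho> 1" if "0 \<le> x" for x using Suc.IH that by blast
    show "density (Suc k) 0 \<le> \<rho> 1" using start rate_pos[of 1] by simp
  qed
  ultimately show ?case ..
qed

lemma F_mono: "0 \<le> y \<Longrightarrow> y \<le> z \<Longrightarrow> F k y \<le> F k z"
  by (rule deriv_nonneg_imp_mono[OF F_has_derivative]) (use density_bounds in auto)

lemma F_nonneg: "0 \<le> y \<Longrightarrow> 0 \<le> F k y"
  using F_mono[of 0 y k] F_start[of k] by (cases "k = 0") (auto simp: F_zeroth)

lemma F_antimono:
  assumes "j \<le> k" "0 \<le> y"
  shows "F k y \<le> F j y"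
proof (rule lift_Suc_antimono_le[where f = "\<lambda>k. F k y", OF _ \<open>j \<le> k\<close>])
  fix k
  have "0 \<le> \<rho> (Suc k) * (F k y - F (Suc k) y)"
    using density_bounds[of y "Suc k"] assms by (simp add: density_Suc)
  then show "F (Suc k) y \<le> F k y" using rate_pos[of "Suc k"] by (simp add: zero_le_mult_iff)
qed

lemma F_le_one: "0 \<le> y \<Longrightarrow> F k y \<le> 1"
  using F_antimono[of 0 k y] by (simp add: F_zeroth)

lemma F_pos: "0 < y \<Longrightarrow> 0 < F k y"
proof (induction k arbitrary: y)
  case 0
  then show ?case by (simp add: F_zeroth)
next
  case (Suc k)
  have "(F (Suc k) has_real_derivative \<rho> (Suc k) * (F k x - F (Suc k) x)) (at x)" for x
    using F_deriv[of "Suc k"] by simp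
  then show ?case
  proof (rule relaxation_strict_lower_bound)
    show "0 < \<rho> (Suc k)" using rate_pos[of "Suc k"] by simp
    show "y / 2 < y" using Suc.prems by simp
    show "0 < F k x" if "y / 2 \<le> x" "x \<le> y" for x using Suc that by simp
    show "0 \<le> F (Suc k) (y / 2)" using F_nonneg Suc.prems by simp
  qed
qed

lemma markov_bound:
  assumes "0 \<le> x"
  shows "x * (1 - F j x) \<le> (\<Sum>k=1..j. 1 / \<rho> k)"
proof -
  have telescope: "(\<Sum>k=1..j. density k z / \<rho> k) = 1 - F j z" for z
  proof -
    have "(\<Sum>k=1..j. density k z / \<rho> k) = (\<Sum>k=1..j. F (k - 1) z - F k z)"
    proof (rule sum.cong)
      fix k assume "k \<in> {1..j}"
      with rate_pos[of k] show "density k z / \<rho> k = F (k - 1) z - F k z"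
        by (simp add: density_def)
    qed simp
    also have "\<dots> = 1 - F j z" by (induction j) (auto simp: F_zeroth)
    finally show ?thesis .
  qed
  define Z where "Z z = (\<Sum>k=1..j. F k z / \<rho> k) - z * (1 - F j z)" for z
  have "(Z has_real_derivative z * density j z) (at z)" for z
  proof -
    have "(Z has_real_derivative (\<Sum>k=1..j. density k z / \<rho> k) - (1 * (1 - F j z) + (0 - density j z) * z)) (at z)"
      unfolding Z_def by (intro DERIV_diff DERIV_sum DERIV_cdivide DERIV_mult DERIV_ident DERIV_const F_has_derivative)
    then show ?thesis unfolding telescope by (simp add: algebra_simps)
  qed
  then have "Z 0 \<le> Z x"
    by (rule deriv_nonneg_imp_mono) (use assms density_bounds in auto)
  moreover have "Z 0 = 0" by (simp add: Z_def F_start)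
  moreover have "(\<Sum>k=1..j. F k x / \<rho> k) \<le> (\<Sum>k=1..j. 1 / \<rho> k)"
    using F_le_one[OF assms] rate_pos by (intro sum_mono divide_right_mono) (auto simp: less_imp_le)
  ultimately show ?thesis by (simp add: Z_def)
qed

lemma half_le_F:
  assumes "0 < y" "(\<Sum>k=1..j. 1 / \<rho> k) \<le> y / 2"
  shows "1 / 2 \<le> F j y"
proof -
  have "y * (1 - F j y) \<le> y * (1 / 2)"
    using markov_bound[of y j] assms by linarith
  then have "1 - F j y \<le> 1 / 2"
    using \<open>0 < y\<close> by (simp only: mult_le_cancel_left_pos)
  then show ?thesis by simp
qed

(* The sum of the exponential variables is at most z if its first N terms sum to at most y0
   and the remaining j terms to at most z - y0. *)
lemma F_shift_lower_bound:
  assumes G: "rate_chain \<sigma> G" and \<sigma>: "\<And>k. 1 \<le> k \<Longrightarrow> \<sigma> k = \<rho> (N + k)"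
    and "0 \<le> y0" "y0 \<le> z"
  shows "F N y0 * G j (z - y0) \<le> F (N + j) z"
  using \<open>y0 \<le> z\<close>
proof (induction j arbitrary: z)
  case 0
  then show ?case using F_mono \<open>0 \<le> y0\<close> by (simp add: rate_chain.F_zeroth[OF G])
next
  case (Suc j)
  define q where "q = F N y0"
  define u where "u z = F (N + Suc j) z - q * G (Suc j) (z - y0)" for z
  have "(u has_real_derivative \<rho> (N + Suc j) * ((F (N + j) x - q * G j (x - y0)) - u x)) (at x)" for x
  proof -
    have "(G (Suc j) has_real_derivative \<sigma> (Suc j) * (G j (x - y0) - G (Suc j) (x - y0))) (at (x - y0))"
      using rate_chain.F_deriv[OF G, of "Suc j"] by simp
    from DERIV_chain2[OF this DERIV_diff[OF DERIV_ident DERIV_const]]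
    have "(u has_real_derivative \<rho> (N + Suc j) * (F (N + j) x - F (N + Suc j) x)
        - q * (\<sigma> (Suc j) * (G j (x - y0) - G (Suc j) (x - y0)) * (1 - 0))) (at x)"
      unfolding u_def using F_deriv[of "N + Suc j" x] by (intro DERIV_diff DERIV_cmult) auto
    then show ?thesis using \<sigma>[of "Suc j"] by (simp add: u_def algebra_simps)
  qed
  then have "0 \<le> u z"
  proof (rule relaxation_lower_bound)
    show "0 \<le> \<rho> (N + Suc j)" using rate_pos[of "N + Suc j"] by simp
    show "y0 \<le> z" by fact
    show "0 \<le> F (N + j) x - q * G j (x - y0)" if "y0 \<le> x" for x
      using Suc.IH that by (simp add: q_def)
    show "0 \<le> u y0"
      using F_nonneg \<open>0 \<le> y0\<close> by (simp add: u_def rate_chain.F_start[OF G])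
  qed
  then show ?case by (simp add: u_def q_def)
qed

end

lemma strict_mono_rates_pos:
  fixes \<rho> :: "nat \<Rightarrow> real"
  assumes "strict_mono \<rho>" "\<rho> 0 = 0" "1 \<le> k"
  shows "0 < \<rho> k"
  using strict_monoD[OF assms(1), of 0 k] assms(2,3) by simp

(* For j \<le> k the term in exp (- \<rho> j * y) of F (k+1) solves F' (k+1) = \<rho> (k+1) * (F k - F (k+1))
   driven by the corresponding term of F k; the new coefficient for j = k+1 makes F (k+1) vanish at 0. *)
fun hypoexp_coeff :: "(nat \<Rightarrow> real) \<Rightarrow> nat \<Rightarrow> nat \<Rightarrow> real" where
  "hypoexp_coeff \<rho> 0 j = (if j = 0 then 1 else 0)"
| "hypoexp_coeff \<rho> (Suc k) j =
     (if j \<le> k then hypoexp_coeff \<rho> k j * \<rho> (Suc k) / (\<rho> (Suc k) - \<rho> j)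
      else if j = Suc k then - (\<Sum>i\<le>k. hypoexp_coeff \<rho> k i * \<rho> (Suc k) / (\<rho> (Suc k) - \<rho> i))
      else 0)"

definition hypoexp_cdf :: "(nat \<Rightarrow> real) \<Rightarrow> nat \<Rightarrow> real \<Rightarrow> real" where
  "hypoexp_cdf \<rho> k y = (\<Sum>j\<le>k. hypoexp_coeff \<rho> k j * exp (- \<rho> j * y))"

lemma hypoexp_cdf_Suc_deriv:
  assumes "inj \<rho>"
  shows "(hypoexp_cdf \<rho> (Suc k) has_real_derivative
           \<rho> (Suc k) * (hypoexp_cdf \<rho> k y - hypoexp_cdf \<rho> (Suc k) y)) (at y)"
proof -
  let ?c = "hypoexp_coeff \<rho> (Suc k)"
  have "(hypoexp_cdf \<rho> n has_real_derivative
          (\<Sum>j\<le>n. hypoexp_coeff \<rho> n j * (- \<rho> j * exp (- \<rho> j * y)))) (at y)" for n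
    unfolding hypoexp_cdf_def by (auto intro!: derivative_eq_intros sum.cong simp: algebra_simps)
  moreover have "(\<Sum>j\<le>Suc k. ?c j * (- \<rho> j * exp (- \<rho> j * y)))
      = \<rho> (Suc k) * (hypoexp_cdf \<rho> k y - hypoexp_cdf \<rho> (Suc k) y)"
  proof -
    have "(\<Sum>j\<le>Suc k. ?c j * (- \<rho> j * exp (- \<rho> j * y)))
        = (\<Sum>j\<le>Suc k. ?c j * (\<rho> (Suc k) - \<rho> j) * exp (- \<rho> j * y))
          - \<rho> (Suc k) * hypoexp_cdf \<rho> (Suc k) y"
      unfolding hypoexp_cdf_def sum_distrib_left sum_subtractf[symmetric]
      by (rule sum.cong) (simp_all add: algebra_simps del: hypoexp_coeff.simps)
    also have "(\<Sum>j\<le>Suc k. ?c j * (\<rho> (Suc k) - \<rho> j) * exp (- \<rho> j * y))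
        = (\<Sum>j\<le>k. ?c j * (\<rho> (Suc k) - \<rho> j) * exp (- \<rho> j * y))"
      by (simp del: hypoexp_coeff.simps)
    also have "\<dots> = (\<Sum>j\<le>k. \<rho> (Suc k) * (hypoexp_coeff \<rho> k j * exp (- \<rho> j * y)))"
    proof (rule sum.cong)
      fix j assume "j \<in> {..k}"
      moreover from this have "\<rho> (Suc k) \<noteq> \<rho> j" using assms by (auto dest: injD)
      ultimately show "?c j * (\<rho> (Suc k) - \<rho> j) * exp (- \<rho> j * y)
          = \<rho> (Suc k) * (hypoexp_coeff \<rho> k j * exp (- \<rho> j * y))"
        by (simp add: field_simps)
    qed simp
    finally show ?thesis by (simp add: hypoexp_cdf_def sum_distrib_left algebra_simps)
  qed
  ultimately show ?thesis by metis
qed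

lemma rate_chain_hypoexp_cdf:
  assumes "strict_mono \<rho>" "\<rho> 0 = 0"
  shows "rate_chain \<rho> (hypoexp_cdf \<rho>)"
proof
  show "0 < \<rho> k" if "1 \<le> k" for k using strict_mono_rates_pos[OF assms that] .
  show "hypoexp_cdf \<rho> 0 y = 1" for y by (simp add: hypoexp_cdf_def assms(2))
  show "hypoexp_cdf \<rho> k 0 = 0" if "1 \<le> k" for k
    using that by (cases k) (simp_all add: hypoexp_cdf_def)
  show "(hypoexp_cdf \<rho> k has_real_derivative \<rho> k * (hypoexp_cdf \<rho> (k - 1) y - hypoexp_cdf \<rho> k y)) (at y)"
    if "1 \<le> k" for k y
    using that hypoexp_cdf_Suc_deriv[OF strict_mono_imp_inj_on[OF assms(1)]] by (cases k) simp_all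
qed

lemma hypoexp_cdf_uniform_lower_bound:
  fixes r :: "nat \<Rightarrow> real"
  assumes "strict_mono r" "r 0 = 0" "summable (\<lambda>i. 1 / r (Suc i))" "0 < y"
  obtains L where "0 < L" "\<And>m. L \<le> hypoexp_cdf r m y"
proof -
  interpret F: rate_chain r "hypoexp_cdf r" by (rule rate_chain_hypoexp_cdf[OF assms(1,2)])
  obtain N where N: "norm (\<Sum>i. 1 / r (Suc (i + N))) < y / 4"
    using suminf_exist_split[of "y / 4" "\<lambda>i. 1 / r (Suc i)"] assms(3,4) by auto
  define \<sigma> where "\<sigma> k = (if k = 0 then 0 else r (N + k))" for k
  have "strict_mono \<sigma>"
    unfolding strict_mono_Suc_iff \<sigma>_def
    using F.rate_pos[of "N + 1"] assms(1) by (auto simp: strict_mono_def)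
  then interpret G: rate_chain \<sigma> "hypoexp_cdf \<sigma>" by (rule rate_chain_hypoexp_cdf) (simp add: \<sigma>_def)
  define q where "q = hypoexp_cdf r N (y / 2)"
  have "0 < q" unfolding q_def using F.F_pos assms(4) by simp
  have "q / 2 \<le> hypoexp_cdf r m y" for m
  proof (cases "m \<le> N")
    case True
    then have "q \<le> hypoexp_cdf r m y"
      using F.F_mono[of "y / 2" y N] F.F_antimono[of m N y] assms(4) by (simp add: q_def)
    with \<open>0 < q\<close> show ?thesis by simp
  next
    case False
    then obtain j where m: "m = N + j" using le_Suc_ex nat_le_linear by blast
    have "(\<Sum>k=1..j. 1 / \<sigma> k) = (\<Sum>i<j. 1 / r (Suc (i + N)))"
      by (simp add: sum.atLeast1_atMost_eq \<sigma>_def add.commute)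
    also have "\<dots> \<le> (\<Sum>i. 1 / r (Suc (i + N)))"
      using summable_ignore_initial_segment[OF assms(3), of N] F.rate_pos
      by (intro sum_le_suminf) (auto simp: less_imp_le)
    also have "\<dots> \<le> (y / 2) / 2" using N by simp
    finally have "1 / 2 \<le> hypoexp_cdf \<sigma> j (y / 2)" by (rule G.half_le_F[rotated]) (use assms(4) in simp)
    then have "q * (1 / 2) \<le> q * hypoexp_cdf \<sigma> j (y / 2)"
      using \<open>0 < q\<close> by (simp add: mult_left_mono)
    moreover have "q * hypoexp_cdf \<sigma> j (y - y / 2) \<le> hypoexp_cdf r m y"
      unfolding q_def m using assms(4)
      by (intro F.F_shift_lower_bound[OF G.rate_chain_axioms]) (auto simp: \<sigma>_def)
    ultimately show ?thesis by simp
  qed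
  with \<open>0 < q\<close> show ?thesis by (intro that[of "q / 2"]) auto
qed

section \<open>Derivatives of generalised polynomials\<close>

definition falling_factorial :: "real \<Rightarrow> nat \<Rightarrow> real" where
  "falling_factorial x p = (\<Prod>i<p. x - of_nat i)"

definition falling_factorial_poly :: "nat \<Rightarrow> real poly" where
  "falling_factorial_poly p = (\<Prod>i<p. [:- of_nat i, 1:])"

lemma poly_falling_factorial_poly: "poly (falling_factorial_poly p) x = falling_factorial x p"
  by (simp add: falling_factorial_poly_def falling_factorial_def poly_prod)

lemma degree_falling_factorial_poly: "degree (falling_factorial_poly p) = p"
  unfolding falling_factorial_poly_def by (subst degree_prod_eq_sum_degree) auto

lemma lead_coeff_falling_factorial_poly: "lead_coeff (falling_factorial_poly p) = 1"
  unfolding falling_factorial_poly_def lead_coeff_prod by simp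

lemma sum_poly_eq_0_if_falling_moments_eq_0:
  fixes A r :: "nat \<Rightarrow> real"
  assumes moments: "\<And>p. p < m \<Longrightarrow> (\<Sum>k\<le>n. A k * falling_factorial (r k) p) = 0"
    and "degree q < m"
  shows "(\<Sum>k\<le>n. A k * poly q (r k)) = 0"
  using \<open>degree q < m\<close>
proof (induction "degree q" arbitrary: q rule: less_induct)
  case less
  define d where "d = degree q"
  define q' where "q' = q - smult (lead_coeff q) (falling_factorial_poly d)"
  have coeff_q': "coeff q' i = 0" if "d \<le> i" for i
    using that coeff_eq_0[of q i] coeff_eq_0[of "falling_factorial_poly d" i]
      lead_coeff_falling_factorial_poly[of d]
    by (cases "i = d") (auto simp: q'_def d_def degree_falling_factorial_poly)
  have "(\<Sum>k\<le>n. A k * poly q' (r k)) = 0"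
  proof (cases "d = 0")
    case True
    then have "q' = 0" using coeff_q' by (intro poly_eqI) simp
    then show ?thesis by simp
  next
    case False
    then have "degree q' < d" using coeff_q' by (intro degree_lessI) auto
    then show ?thesis using less by (simp add: d_def)
  qed
  moreover have "(\<Sum>k\<le>n. A k * poly q (r k))
      = (\<Sum>k\<le>n. A k * poly q' (r k)) + lead_coeff q * (\<Sum>k\<le>n. A k * falling_factorial (r k) d)"
    by (simp add: q'_def poly_falling_factorial_poly sum_subtractf sum_distrib_left algebra_simps)
  moreover have "(\<Sum>k\<le>n. A k * falling_factorial (r k) d) = 0"
    using moments less.prems by (simp add: d_def)
  ultimately show ?case by simp
qed

lemma higher_deriv_powr_sum:
  fixes f :: "real \<Rightarrow> real"
  assumes f: "\<And>t. 0 < t \<Longrightarrow> f t = (\<Sum>k\<le>n. A k * t powr r k)" and "0 < t"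
  shows "(deriv ^^ p) f t = (\<Sum>k\<le>n. A k * falling_factorial (r k) p * t powr (r k - real p))"
  using \<open>0 < t\<close>
proof (induction p arbitrary: t)
  case 0
  then show ?case using f by (simp add: falling_factorial_def)
next
  case (Suc p)
  define h where "h t = (\<Sum>k\<le>n. A k * falling_factorial (r k) p * t powr (r k - real p))" for t
  have "(h has_real_derivative
          (\<Sum>k\<le>n. A k * falling_factorial (r k) p * ((r k - real p) * t powr (r k - real p - 1)))) (at t)"
    unfolding h_def using Suc.prems by (intro DERIV_sum DERIV_cmult has_real_derivative_powr) auto
  then have "((deriv ^^ p) f has_real_derivative
          (\<Sum>k\<le>n. A k * falling_factorial (r k) p * ((r k - real p) * t powr (r k - real p - 1)))) (at t)"
    by (rule has_field_derivative_transform_within_open[of _ _ _ "{0<..}"])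
      (use Suc in \<open>auto simp: h_def\<close>)
  then show ?case
    by (simp add: DERIV_imp_deriv falling_factorial_def algebra_simps)
qed

lemma inE_has_derivative:
  assumes "inE r n f" "0 < t"
  shows "(f has_real_derivative deriv f t) (at t)"
proof -
  obtain A where f: "\<And>t. 0 < t \<Longrightarrow> f t = (\<Sum>k\<le>n. A k * t powr r k)"
    using assms(1) by (auto simp: inE_def)
  have "((\<lambda>t. \<Sum>k\<le>n. A k * t powr r k) has_real_derivative (\<Sum>k\<le>n. A k * (r k * t powr (r k - 1)))) (at t)"
    using assms(2) by (intro DERIV_sum DERIV_cmult has_real_derivative_powr) auto
  then have "(f has_real_derivative (\<Sum>k\<le>n. A k * (r k * t powr (r k - 1)))) (at t)"
    by (rule has_field_derivative_transform_within_open[of _ _ _ "{0<..}"]) (use assms f in auto)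
  then show ?thesis by (simp add: DERIV_imp_deriv)
qed

(* With D = d/dy: exp_sum_chain r m A (k - 1) = (1 + D / r k) (exp_sum_chain r m A k), starting
   from exp_sum_chain r m A m y = (\<Sum>j\<le>m. A j * exp (- r j * y)). *)
definition exp_sum_chain :: "(nat \<Rightarrow> real) \<Rightarrow> nat \<Rightarrow> (nat \<Rightarrow> real) \<Rightarrow> nat \<Rightarrow> real \<Rightarrow> real" where
  "exp_sum_chain r m A k y = (\<Sum>j\<le>m. A j * (\<Prod>i\<in>{k<..m}. 1 - r j / r i) * exp (- r j * y))"

lemma exp_sum_chain_top: "exp_sum_chain r m A m y = (\<Sum>j\<le>m. A j * exp (- r j * y))"
  by (simp add: exp_sum_chain_def)

lemma exp_sum_chain_zeroth:
  assumes "r 0 = 0" "\<And>k. 1 \<le> k \<Longrightarrow> r k \<noteq> 0"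
  shows "exp_sum_chain r m A 0 y = A 0"
proof -
  have "(\<Prod>i\<in>{0<..m}. 1 - r j / r i) = 0" if "1 \<le> j" "j \<le> m" for j
    using that assms(2)[of j] by (intro prod_zero bexI[of _ j]) auto
  then have "exp_sum_chain r m A 0 y = (\<Sum>j\<in>{0}. A j * (\<Prod>i\<in>{0<..m}. 1 - r j / r i) * exp (- r j * y))"
    unfolding exp_sum_chain_def by (intro sum.mono_neutral_right) auto
  then show ?thesis by (simp add: assms(1))
qed

lemma exp_sum_chain_at_zero:
  assumes moments: "\<And>p. p < m \<Longrightarrow> (\<Sum>j\<le>m. A j * falling_factorial (r j) p) = 0"
    and "1 \<le> k" "k \<le> m"
  shows "exp_sum_chain r m A k 0 = 0"
proof -
  define Q where "Q = (\<Prod>i\<in>{k<..m}. [:1, - 1 / r i:])"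
  have "degree Q \<le> (\<Sum>i\<in>{k<..m}. 1)"
    unfolding Q_def by (rule order_trans[OF degree_prod_sum_le sum_mono]) auto
  then have "degree Q < m" using assms(2,3) by simp
  from sum_poly_eq_0_if_falling_moments_eq_0[OF moments this]
  show ?thesis by (simp add: exp_sum_chain_def Q_def poly_prod algebra_simps)
qed

lemma exp_sum_chain_deriv:
  assumes "1 \<le> k" "k \<le> m" "r k \<noteq> 0"
  shows "(exp_sum_chain r m A k has_real_derivative
           r k * (exp_sum_chain r m A (k - 1) y - exp_sum_chain r m A k y)) (at y)"
proof -
  let ?c = "\<lambda>k j. \<Prod>i\<in>{k<..m}. 1 - r j / r i"
  have "{k - 1<..m} = insert k {k<..m}" using assms by auto
  then have step: "r k * (?c (k - 1) j - ?c k j) = - r j * ?c k j" for j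
    using assms(3) by (simp add: field_simps)
  have "(exp_sum_chain r m A k has_real_derivative (\<Sum>j\<le>m. A j * ?c k j * (- r j * exp (- r j * y)))) (at y)"
    unfolding exp_sum_chain_def by (auto intro!: derivative_eq_intros sum.cong simp: algebra_simps)
  moreover have "r k * (exp_sum_chain r m A (k - 1) y - exp_sum_chain r m A k y)
      = (\<Sum>j\<le>m. A j * (r k * (?c (k - 1) j - ?c k j)) * exp (- r j * y))"
    unfolding exp_sum_chain_def by (simp add: sum_distrib_left sum_subtractf[symmetric] algebra_simps)
  ultimately show ?thesis unfolding step by (simp add: algebra_simps)
qed

lemma flat_at_one_eq_scaled_hypoexp_cdf:
  fixes r :: "nat \<Rightarrow> real"
  assumes "strict_mono r" "r 0 = 0" "inE r m f" "\<And>j. j < m \<Longrightarrow> (deriv ^^ j) f 1 = 0"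
  obtains c where "\<And>t. 0 < t \<Longrightarrow> f t = c * hypoexp_cdf r m (- ln t)"
proof -
  interpret rate_chain r "hypoexp_cdf r" by (rule rate_chain_hypoexp_cdf[OF assms(1,2)])
  obtain A where f: "\<And>t. 0 < t \<Longrightarrow> f t = (\<Sum>j\<le>m. A j * t powr r j)"
    using assms(3) by (auto simp: inE_def)
  have moments: "(\<Sum>j\<le>m. A j * falling_factorial (r j) p) = 0" if "p < m" for p
    using higher_deriv_powr_sum[OF f, of 1 p] assms(4)[OF that] by simp
  define H where "H k y = exp_sum_chain r m A k y - A 0 * hypoexp_cdf r k y" for k y
  have "H m y = 0" for y
  proof (rule relaxation_chain_zero[of H m r])
    show "H 0 y = 0" for y
      using exp_sum_chain_zeroth[of r, OF assms(2) rate_pos[THEN less_imp_neq, THEN not_sym]]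
      by (simp add: H_def F_zeroth)
    show "H k 0 = 0" if "1 \<le> k" "k \<le> m" for k
      using exp_sum_chain_at_zero[OF moments that] that by (simp add: H_def F_start)
    show "(H k has_real_derivative r k * (H (k - 1) y - H k y)) (at y)" if "1 \<le> k" "k \<le> m" for k y
      unfolding H_def using that rate_pos[OF that(1)]
      by (auto intro!: derivative_eq_intros exp_sum_chain_deriv F_deriv simp: algebra_simps)
  qed simp
  moreover have "f t = exp_sum_chain r m A m (- ln t)" if "0 < t" for t
    using that by (simp add: f exp_sum_chain_top powr_def)
  ultimately show ?thesis by (intro that[of "A 0"]) (simp add: H_def)
qed

section \<open>The Chebyshev-Bernstein basis at the left end point\<close>

lemma CB_basis_B0_at_left:
  assumes "CB_basis r m a b B" "0 < a"
  shows "B 0 a = 1"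
proof -
  have "B k a = 0" if "k \<in> {..m} - {0}" for k
  proof -
    have "(deriv ^^ 0) (B k) a = 0"
      using assms(1) that unfolding CB_basis_def zero_mult_def by blast
    then show ?thesis by simp
  qed
  then have "(\<Sum>k\<le>m. B k a) = (\<Sum>k\<in>{0}. B k a)"
    by (intro sum.mono_neutral_right) auto
  with assms show ?thesis by (simp add: CB_basis_def)
qed

lemma CB_expansion_deriv_at_left:
  assumes CB: "CB_basis r m a b B" and "0 < a" "1 \<le> m"
    and P: "\<And>t. 0 < t \<Longrightarrow> P t = (\<Sum>i\<le>m. B i t * \<eta> i)"
  shows "deriv P a = deriv (B 0) a * (\<eta> 0 - \<eta> 1)"
proof -
  have B_deriv: "(B k has_real_derivative deriv (B k) a) (at a)" if "k \<le> m" for k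
    using CB that \<open>0 < a\<close> by (intro inE_has_derivative) (auto simp: CB_basis_def)
  have B_deriv_0: "deriv (B k) a = 0" if "k \<in> {..m} - {0, 1}" for k
  proof -
    have "1 < k" "k \<le> m" using that by auto
    then have "(deriv ^^ 1) (B k) a = 0" using CB unfolding CB_basis_def zero_mult_def by blast
    then show ?thesis by simp
  qed
  have sum_01: "(\<Sum>k\<le>m. g k) = g 0 + g 1" if "\<And>k. k \<in> {..m} - {0, 1} \<Longrightarrow> g k = 0" for g :: "nat \<Rightarrow> real"
    using \<open>1 \<le> m\<close> that by (subst sum.mono_neutral_right[of "{..m}" "{0, 1}"]) auto
  have "((\<lambda>t. \<Sum>k\<le>m. B k t) has_real_derivative (\<Sum>k\<le>m. deriv (B k) a)) (at a)"
    by (intro DERIV_sum B_deriv) simp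
  moreover have "((\<lambda>t. \<Sum>k\<le>m. B k t) has_real_derivative 0) (at a)"
  proof (rule has_field_derivative_transform_within_open[of "\<lambda>_. 1" _ _ "{0<..}"])
    show "1 = (\<Sum>k\<le>m. B k t)" if "t \<in> {0<..}" for t
      using CB that by (simp add: CB_basis_def)
  qed (use \<open>0 < a\<close> in auto)
  ultimately have "(\<Sum>k\<le>m. deriv (B k) a) = 0" by (rule DERIV_unique)
  then have B1: "deriv (B 1) a = - deriv (B 0) a"
    using sum_01[OF B_deriv_0] by simp
  have "((\<lambda>t. \<Sum>i\<le>m. B i t * \<eta> i) has_real_derivative (\<Sum>i\<le>m. deriv (B i) a * \<eta> i)) (at a)"
    by (intro DERIV_sum DERIV_cmult_right B_deriv) simp
  then have "(P has_real_derivative (\<Sum>i\<le>m. deriv (B i) a * \<eta> i)) (at a)"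
    by (rule has_field_derivative_transform_within_open[of _ _ _ "{0<..}"]) (use P \<open>0 < a\<close> in auto)
  then have "deriv P a = deriv (B 0) a * \<eta> 0 + deriv (B 1) a * \<eta> 1"
    using sum_01[of "\<lambda>i. deriv (B i) a * \<eta> i"] B_deriv_0 by (simp add: DERIV_imp_deriv)
  with B1 show ?thesis by (simp add: algebra_simps)
qed

lemma CB_basis_deriv_B0_bound:
  fixes r :: "nat \<Rightarrow> real"
  assumes "strict_mono r" "r 0 = 0" "0 < a" "a < 1" and CB: "CB_basis r m a 1 B"
    and "0 < L" "L \<le> hypoexp_cdf r m (- ln a)"
  shows "\<bar>deriv (B 0) a\<bar> \<le> r 1 / (a * L)"
proof -
  interpret rate_chain r "hypoexp_cdf r" by (rule rate_chain_hypoexp_cdf[OF assms(1,2)])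
  have "inE r m (B 0)" "\<And>j. j < m \<Longrightarrow> (deriv ^^ j) (B 0) 1 = 0"
    using CB by (auto simp: CB_basis_def zero_mult_def)
  then obtain c where B0: "\<And>t. 0 < t \<Longrightarrow> B 0 t = c * hypoexp_cdf r m (- ln t)"
    using flat_at_one_eq_scaled_hypoexp_cdf[OF assms(1,2)] by blast
  define y where "y = - ln a"
  have "0 < y" using assms(3,4) by (simp add: y_def)
  have c: "c = 1 / hypoexp_cdf r m y"
    using B0[OF assms(3)] CB_basis_B0_at_left[OF CB assms(3)] assms(6,7)
    by (simp add: y_def field_simps)
  have "((\<lambda>t. - ln t) has_real_derivative - (1 / a)) (at a)"
    using assms(3) by (auto intro!: derivative_eq_intros)
  from DERIV_chain2[OF F_has_derivative this]
  have "((\<lambda>t. c * hypoexp_cdf r m (- ln t)) has_real_derivative c * (density m y * - (1 / a))) (at a)"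
    unfolding y_def by (rule DERIV_cmult)
  then have "(B 0 has_real_derivative c * (density m y * - (1 / a))) (at a)"
    by (rule has_field_derivative_transform_within_open[of _ _ _ "{0<..}"]) (use B0 assms(3) in auto)
  then have "\<bar>deriv (B 0) a\<bar> = c * density m y / a"
    using density_bounds[of y m] F_pos[OF \<open>0 < y\<close>, of m] \<open>0 < y\<close> assms(3)
    by (simp add: DERIV_imp_deriv c abs_mult)
  also have "\<dots> \<le> (1 / L) * r 1 / a"
  proof (intro divide_right_mono mult_mono)
    show "c \<le> 1 / L" using assms(6,7) by (simp add: c y_def frac_le)
  qed (use density_bounds[of y m] \<open>0 < y\<close> assms(3,6) in auto)
  finally show ?thesis by (simp add: mult.commute)
qed

lemma supnorm_scale:
  assumes "1 \<le> s" "\<And>j. j < s \<Longrightarrow> v j = d * w j"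
  shows "supnorm s v = \<bar>d\<bar> * supnorm s w"
proof -
  have "(\<lambda>j. \<bar>v j\<bar>) ` {..<s} = (\<lambda>x. \<bar>d\<bar> * x) ` (\<lambda>j. \<bar>w j\<bar>) ` {..<s}"
    using assms(2) by (auto simp: abs_mult image_image)
  moreover have "mono (\<lambda>x. \<bar>d\<bar> * x)" by (rule monoI) (simp add: mult_left_mono)
  ultimately show ?thesis
    unfolding supnorm_def using assms(1) by (simp add: mono_Max_commute lessThan_empty_iff)
qed

lemma supnorm_pos:
  assumes "j < s" "v j \<noteq> 0"
  shows "0 < supnorm s v"
proof -
  have "\<bar>v j\<bar> \<le> supnorm s v" unfolding supnorm_def using assms(1) by (intro Max_ge) auto
  with assms(2) show ?thesis by simp
qed

theorem mainTheorem7: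
  fixes r :: "nat \<Rightarrow> real" and a :: real
  assumes "r 0 = 0" and "strict_mono r" and "filterlim r at_top sequentially"
    and "summable (\<lambda>i. 1 / r (Suc i))"
    and "0 < a" and "a < 1"
  shows "\<exists>c>0. \<forall>(s::nat) (n::nat) (P::nat \<Rightarrow> real \<Rightarrow> real) (m::nat)
            (B::nat \<Rightarrow> real \<Rightarrow> real) (\<eta>::nat \<Rightarrow> nat \<Rightarrow> real).
           1 \<le> s \<longrightarrow> 1 \<le> n \<longrightarrow> (\<forall>j<s. inE r n (P j)) \<longrightarrow>
           (\<exists>j<s. deriv (P j) a \<noteq> 0) \<longrightarrow> n \<le> m \<longrightarrow>
           CB_basis r m a 1 B \<longrightarrow>
           (\<forall>j<s. \<forall>t>0. P j t = (\<Sum>i\<le>m. B i t * \<eta> i j)) \<longrightarrow>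
           supnorm s (\<lambda>j. \<eta> 0 j - \<eta> 1 j) \<ge> supnorm s (\<lambda>j. deriv (P j) a) / c
           \<and> supnorm s (\<lambda>j. deriv (P j) a) / c > 0"
proof -
  have "0 < - ln a" using assms(5,6) by simp
  then obtain L where L: "0 < L" "\<And>m. L \<le> hypoexp_cdf r m (- ln a)"
    using hypoexp_cdf_uniform_lower_bound[OF assms(2,1,4)] by blast
  define c where "c = r 1 / (a * L)"
  have "0 < c" using strict_mono_rates_pos[OF assms(2,1), of 1] L assms(5) by (simp add: c_def)
  show ?thesis
  proof (intro exI[of _ c] conjI allI impI \<open>0 < c\<close>)
    fix s n m :: nat and P B :: "nat \<Rightarrow> real \<Rightarrow> real" and \<eta> :: "nat \<Rightarrow> nat \<Rightarrow> real"
    assume "1 \<le> s" "1 \<le> n" "\<forall>j<s. inE r n (P j)" "\<exists>j<s. deriv (P j) a \<noteq> 0" "n \<le> m"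
      and CB: "CB_basis r m a 1 B" and P: "\<forall>j<s. \<forall>t>0. P j t = (\<Sum>i\<le>m. B i t * \<eta> i j)"
    let ?d = "deriv (B 0) a" and ?P' = "supnorm s (\<lambda>j. deriv (P j) a)"
      and ?\<eta> = "supnorm s (\<lambda>j. \<eta> 0 j - \<eta> 1 j)"
    have "1 \<le> m" using \<open>1 \<le> n\<close> \<open>n \<le> m\<close> by simp
    have deriv_P_entries: "deriv (P j) a = ?d * (\<eta> 0 j - \<eta> 1 j)" if "j < s" for j
      by (rule CB_expansion_deriv_at_left[OF CB assms(5) \<open>1 \<le> m\<close>, of "P j" "\<lambda>i. \<eta> i j"])
        (use P that in simp)
    have P': "?P' = \<bar>?d\<bar> * ?\<eta>" by (rule supnorm_scale[OF \<open>1 \<le> s\<close> deriv_P_entries])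
    obtain j where "j < s" "deriv (P j) a \<noteq> 0" using \<open>\<exists>j<s. deriv (P j) a \<noteq> 0\<close> by blast
    then have "0 < ?P'" by (rule supnorm_pos)
    then have "0 < ?\<eta>" unfolding P' by (simp add: zero_less_mult_iff)
    have "\<bar>?d\<bar> \<le> c"
      unfolding c_def using CB_basis_deriv_B0_bound[OF assms(2,1,5,6) CB L(1,2)] .
    then have "?P' \<le> c * ?\<eta>" unfolding P' using \<open>0 < ?\<eta>\<close> by (simp add: mult_right_mono)
    then show "?P' / c \<le> ?\<eta>" using \<open>0 < c\<close> by (simp add: divide_le_eq mult.commute)
    show "0 < ?P' / c" using \<open>0 < ?P'\<close> \<open>0 < c\<close> by simp
  qed
qed

end
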